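(* If $n=p_1^{m_1}p_2^{m_2}$ with primes $p_1<p_2$, positive integers $m_1,m_2$, and $m_i>1$ for at least one $i$, then $\mathcal E_{\mathbb Z_n}$ is Laplacian integral.
   Context: The essential ideal graph $\mathcal E_{\mathbb Z_n}$ has vertices the nonzero proper ideals of $\mathbb Z_n$, with distinct $I,K$ adjacent iff $I+K$ is an essential ideal (an ideal meeting every nonzero ideal nontrivially). A graph is Laplacian integral if all eigenvalues of its Laplacian matrix $D-A$ are integers. *)

theory Defs
  imports Complex_Main "HOL-Number_Theory.Residues" "HOL-Algebra.AbelCoset"
begin

definition laplacian_apply ::
  "'v set \<Rightarrow> ('v \<Rightarrow> 'v \<Rightarrow> bool) \<Rightarrow> ('v \<Rightarrow> complex) \<Rightarrow> 'v \<Rightarrow> complex" where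
  "laplacian_apply V adj f x =
     of_nat (card {y \<in> V. adj x y}) * f x - (\<Sum>y\<in>{y \<in> V. adj x y}. f y)"

definition laplacian_eigenvalue ::
  "'v set \<Rightarrow> ('v \<Rightarrow> 'v \<Rightarrow> bool) \<Rightarrow> complex \<Rightarrow> bool" where
  "laplacian_eigenvalue V adj \<mu> \<longleftrightarrow>
     (\<exists>f. (\<exists>x\<in>V. f x \<noteq> 0) \<and> (\<forall>x\<in>V. laplacian_apply V adj f x = \<mu> * f x))"

definition laplacian_integral :: "'v set \<Rightarrow> ('v \<Rightarrow> 'v \<Rightarrow> bool) \<Rightarrow> bool" where
  "laplacian_integral V adj \<longleftrightarrow> (\<forall>\<mu>. laplacian_eigenvalue V adj \<mu> \<longrightarrow> \<mu> \<in> \<int>)"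

definition essential_ideal :: "('a, 'b) ring_scheme \<Rightarrow> 'a set \<Rightarrow> bool" where
  "essential_ideal R J \<longleftrightarrow> ideal J R \<and>
     (\<forall>K. ideal K R \<and> K \<noteq> {\<zero>\<^bsub>R\<^esub>} \<longrightarrow> J \<inter> K \<noteq> {\<zero>\<^bsub>R\<^esub>})"

definition essential_ideal_graph_vertices :: "('a, 'b) ring_scheme \<Rightarrow> 'a set set" where
  "essential_ideal_graph_vertices R =
     {I. ideal I R \<and> I \<noteq> {\<zero>\<^bsub>R\<^esub>} \<and> I \<noteq> carrier R}"

definition essential_ideal_graph_adj :: "('a, 'b) ring_scheme \<Rightarrow> 'a set \<Rightarrow> 'a set \<Rightarrow> bool" where
  "essential_ideal_graph_adj R I K \<longleftrightarrow> I \<noteq> K \<and> essential_ideal R (set_add R I K)"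

end

theory Submission
  imports Defs
begin

(* Write n = a b with a = p1^m1 and b = p2^m2. In Z_n the ideals aZ_n and bZ_n meet only in 0, so
   an essential ideal is contained in neither; conversely an ideal J contained in neither has an
   element z divisible by neither a nor b, and then for every nonzero y of an ideal K the residue of
   lcm(y, z) is a nonzero element of J \<inter> K, because a prime power dividing lcm(y, z) divides y or z.
   Hence I + K is essential iff I and K do not both lie in aZ_n or both in bZ_n, i.e. the essential
   ideal graph is complete multipartite: one part for the vertices inside aZ_n, one for those inside
   bZ_n, and singletons. The Laplacian of a complete multipartite graph on N vertices has only the
   eigenvalues 0 (constant vectors), N (vectors summing to 0 on every part) and N - |part|
   (vectors supported on one part with sum 0 there). *)

lemma sum_laplacian_apply_eq_0:
  assumes "finite V" and sym: "\<And>x y. x \<in> V \<Longrightarrow> y \<in> V \<Longrightarrow> adj x y \<longleftrightarrow> adj y x"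
  shows "(\<Sum>x\<in>V. laplacian_apply V adj f x) = 0"
proof -
  have "(\<Sum>x\<in>V. \<Sum>y | y \<in> V \<and> adj x y. f y) = (\<Sum>y\<in>V. \<Sum>x | x \<in> V \<and> adj x y. f y)"
    by (rule sum.swap_restrict[OF assms(1,1)])
  also have "\<dots> = (\<Sum>y\<in>V. of_nat (card {x \<in> V. adj y x}) * f y)"
  proof (rule sum.cong[OF refl])
    fix y assume "y \<in> V"
    then have "{x. x \<in> V \<and> adj x y} = {x \<in> V. adj y x}" using sym by blast
    then show "(\<Sum>x | x \<in> V \<and> adj x y. f y) = of_nat (card {x \<in> V. adj y x}) * f y" by simp
  qed
  finally show ?thesis
    unfolding laplacian_apply_def by (simp add: sum_subtractf)
qed

lemma laplacian_apply_complete_multipartite: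
  assumes "finite V" "x \<in> V" and adj: "\<And>y. y \<in> V \<Longrightarrow> adj x y \<longleftrightarrow> \<not> E x y"
  shows "laplacian_apply V adj f x =
    (of_nat (card V) - of_nat (card {y \<in> V. E x y})) * f x
      - ((\<Sum>y\<in>V. f y) - (\<Sum>y | y \<in> V \<and> E x y. f y))"
proof -
  have nbrs: "{y \<in> V. adj x y} = V - {y \<in> V. E x y}" using adj by auto
  have "card {y \<in> V. adj x y} = card V - card {y \<in> V. E x y}"
    unfolding nbrs using assms(1) by (intro card_Diff_subset) auto
  moreover have "card {y \<in> V. E x y} \<le> card V"
    using assms(1) by (intro card_mono) auto
  moreover have "(\<Sum>y\<in>{y \<in> V. adj x y}. f y) = (\<Sum>y\<in>V. f y) - (\<Sum>y | y \<in> V \<and> E x y. f y)"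
    unfolding nbrs using assms(1) by (intro sum_diff) auto
  ultimately show ?thesis
    unfolding laplacian_apply_def by (simp add: of_nat_diff)
qed

lemma laplacian_integral_complete_multipartite:
  assumes fin: "finite V"
    and E_sym: "\<And>x y. x \<in> V \<Longrightarrow> y \<in> V \<Longrightarrow> E x y \<Longrightarrow> E y x"
    and E_trans: "\<And>x y z. x \<in> V \<Longrightarrow> y \<in> V \<Longrightarrow> z \<in> V \<Longrightarrow> E x y \<Longrightarrow> E y z \<Longrightarrow> E x z"
    and adj: "\<And>x y. x \<in> V \<Longrightarrow> y \<in> V \<Longrightarrow> adj x y \<longleftrightarrow> \<not> E x y"
  shows "laplacian_integral V adj"
  unfolding laplacian_integral_def
proof (intro allI impI)
  fix \<mu> assume "laplacian_eigenvalue V adj \<mu>"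
  then obtain f x0 where x0: "x0 \<in> V" "f x0 \<noteq> 0"
    and eigen: "\<And>x. x \<in> V \<Longrightarrow> laplacian_apply V adj f x = \<mu> * f x"
    unfolding laplacian_eigenvalue_def by blast
  define N where "N = card V"
  define part where "part x = {y \<in> V. E x y}" for x
  define S where "S = (\<Sum>y\<in>V. f y)"
  define g where "g x = (\<Sum>y\<in>part x. f y)" for x
  have eq: "\<mu> * f x = (of_nat N - of_nat (card (part x))) * f x - (S - g x)" if "x \<in> V" for x
  proof -
    have "laplacian_apply V adj f x = (of_nat N - of_nat (card (part x))) * f x - (S - g x)"
      unfolding N_def part_def S_def g_def
      by (rule laplacian_apply_complete_multipartite) (use fin that adj in auto)
    then show ?thesis using eigen[OF that] by simp
  qed
  show "\<mu> \<in> \<int>"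
  proof (cases "\<mu> = 0 \<or> \<mu> = of_nat N")
    case True
    then show ?thesis by auto
  next
    case False
    have "\<mu> * S = (\<Sum>x\<in>V. laplacian_apply V adj f x)"
      unfolding S_def sum_distrib_left by (simp add: eigen)
    also have "\<dots> = 0"
      using adj E_sym by (intro sum_laplacian_apply_eq_0[OF fin]) blast
    finally have S0: "S = 0" using False by simp
    have g0: "g x = 0" if "x \<in> V" for x
    proof -
      have "\<mu> * g x = (\<Sum>y\<in>part x. (of_nat N - of_nat (card (part x))) * f y + g x)"
        unfolding g_def sum_distrib_left
      proof (rule sum.cong[OF refl])
        fix y assume "y \<in> part x"
        then have "y \<in> V" "part y = part x" unfolding part_def using that E_sym E_trans by blast+
        then show "\<mu> * f y = (of_nat N - of_nat (card (part x))) * f y + (\<Sum>y\<in>part x. f y)"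
          using eq[of y] S0 unfolding g_def by simp
      qed
      also have "\<dots> = (of_nat N - of_nat (card (part x))) * g x + of_nat (card (part x)) * g x"
        unfolding sum.distrib sum_distrib_left[symmetric] g_def by simp
      also have "\<dots> = of_nat N * g x" by (simp add: algebra_simps)
      finally have "(\<mu> - of_nat N) * g x = 0" by (simp add: algebra_simps)
      then show ?thesis using False by simp
    qed
    have "(\<mu> - (of_nat N - of_nat (card (part x0)))) * f x0 = 0"
      using eq[OF x0(1)] S0 g0[OF x0(1)] by (simp add: algebra_simps)
    then have "\<mu> = of_nat N - of_nat (card (part x0))" using x0(2) by simp
    then show ?thesis by simp
  qed
qed

lemma prime_power_dvd_lcmD:
  fixes p y z :: int
  assumes "prime p" "y \<noteq> 0" "z \<noteq> 0" "p ^ k dvd lcm y z"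
  shows "p ^ k dvd y \<or> p ^ k dvd z"
proof -
  have p: "\<not> is_unit p" using assms(1) not_prime_unit by blast
  have "k \<le> multiplicity p (lcm y z)"
    using assms(2-4) power_dvd_iff_le_multiplicity[OF _ p] by simp
  also have "\<dots> = max (multiplicity p y) (multiplicity p z)"
    by (rule multiplicity_lcm[OF assms(2,3,1)])
  finally show ?thesis
    using power_dvd_iff_le_multiplicity[OF assms(2) p] power_dvd_iff_le_multiplicity[OF assms(3) p]
    by (simp add: max_def split: if_splits)
qed

lemma (in ring) set_add_ideals_subset_iff:
  assumes "ideal I R" "ideal K R" "ideal D R"
  shows "I <+> K \<subseteq> D \<longleftrightarrow> I \<subseteq> D \<and> K \<subseteq> D"
  using union_genideal[OF assms(1,2)] Idl_subset_ideal[OF assms(3), of "I \<union> K"]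
    ideal.Icarr[OF assms(1)] ideal.Icarr[OF assms(2)] by blast

context residues
begin

lemma ideal_multiples:
  assumes "0 < d" "d dvd m" "d < m"
  shows "ideal {x \<in> carrier R. d dvd x} R"
proof -
  have "cgenideal R d = {x \<in> carrier R. d dvd x}"
  proof (intro equalityI subsetI)
    fix x assume "x \<in> cgenideal R d"
    then obtain y where "x = (y * d) mod m" unfolding cgenideal_def res_mult_eq by auto
    then show "x \<in> {x \<in> carrier R. d dvd x}" using assms by (simp add: dvd_mod)
  next
    fix x assume x: "x \<in> {x \<in> carrier R. d dvd x}"
    then have "0 \<le> x" "d dvd x" by (auto simp: res_carrier_eq)
    then have "0 \<le> x div d" "x div d \<le> x" "x = (x div d) * d"
      using assms(1) by (auto simp: pos_imp_zdiv_nonneg_iff zdiv_mono2[of x 1 d, simplified])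
    then have "x = (x div d) \<otimes> d" "x div d \<in> carrier R"
      using x by (auto simp: res_carrier_eq res_mult_eq)
    then show "x \<in> cgenideal R d" unfolding cgenideal_def by blast
  qed
  moreover have "d \<in> carrier R" using assms by (simp add: res_carrier_eq)
  ultimately show ?thesis using cgenideal_ideal by metis
qed

lemma carrier_dvd_modulus_imp_zero: "x \<in> carrier R \<Longrightarrow> m dvd x \<Longrightarrow> x = \<zero>"
  by (cases "x = 0") (auto simp: res_carrier_eq res_zero_eq zdvd_not_zless)

lemma ideal_zero_closed: "ideal I R \<Longrightarrow> \<zero> \<in> I"
  by (rule additive_subgroup.zero_closed[OF ideal.axioms(1)])

lemma mod_mem_ideal:
  assumes "ideal K R" "y \<in> K" "y dvd t"
  shows "t mod m \<in> K"
proof -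
  obtain s where "t = y * s" using assms(3) by blast
  then have "t mod m = y \<otimes> (s mod m)" by (simp add: res_mult_eq mod_mult_right_eq)
  then show ?thesis using ideal.I_r_closed[OF assms(1,2)] by simp
qed

lemma multiples_inter_multiples:
  assumes "m = a * b" "coprime a b"
  shows "{x \<in> carrier R. a dvd x} \<inter> {x \<in> carrier R. b dvd x} = {\<zero>}"
  using assms m_gt_one carrier_dvd_modulus_imp_zero divides_mult[of a _ b]
  by (auto simp: res_carrier_eq res_zero_eq)

lemma essential_ideal_not_subset_multiples:
  assumes "essential_ideal R J" "m = a * b" "coprime a b" "1 < a" "1 < b"
  shows "\<not> J \<subseteq> {x \<in> carrier R. a dvd x}"
proof
  assume J: "J \<subseteq> {x \<in> carrier R. a dvd x}"
  let ?Q = "{x \<in> carrier R. b dvd x}"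
  have "b < m" using assms(2,4,5) by simp
  then have "ideal ?Q R" "b \<in> ?Q" "b \<noteq> \<zero>"
    using assms(2,5) ideal_multiples[of b] by (auto simp: res_carrier_eq res_zero_eq)
  then have "J \<inter> ?Q \<noteq> {\<zero>}" "\<zero> \<in> J \<inter> ?Q"
    using assms(1) ideal_zero_closed unfolding essential_ideal_def by blast+
  moreover have "J \<inter> ?Q \<subseteq> {\<zero>}" using J multiples_inter_multiples[OF assms(2,3)] by blast
  ultimately show False by blast
qed

lemma ideal_obtain_not_dvd_both:
  assumes "ideal J R" "a dvd m" "b dvd m"
    and "\<not> J \<subseteq> {x \<in> carrier R. a dvd x}" "\<not> J \<subseteq> {x \<in> carrier R. b dvd x}"
  obtains z where "z \<in> J" "\<not> a dvd z" "\<not> b dvd z"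
proof -
  obtain x y where x: "x \<in> J" "\<not> a dvd x" and y: "y \<in> J" "\<not> b dvd y"
    using assms(4,5) ideal.Icarr[OF assms(1)] by blast
  show ?thesis
  proof (cases "b dvd x \<and> a dvd y")
    case True
    have "x \<oplus> y \<in> J"
      using x(1) y(1) by (rule additive_subgroup.a_closed[OF ideal.axioms(1)[OF assms(1)]])
    moreover have "\<not> a dvd x \<oplus> y" "\<not> b dvd x \<oplus> y"
      using True x y assms(2,3)
      by (simp_all add: res_add_eq dvd_mod_iff dvd_add_left_iff dvd_add_right_iff)
    ultimately show ?thesis using that by blast
  next
    case False
    then show ?thesis using that x y by blast
  qed
qed

lemma essential_ideal_if_not_subset_multiples:
  fixes p q :: int
  assumes m: "m = p ^ k * q ^ l" and p: "prime p" and q: "prime q" and "p \<noteq> q"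
    and J: "ideal J R"
    and "\<not> J \<subseteq> {x \<in> carrier R. p ^ k dvd x}" "\<not> J \<subseteq> {x \<in> carrier R. q ^ l dvd x}"
  shows "essential_ideal R J"
  unfolding essential_ideal_def
proof (intro conjI allI impI)
  show "ideal J R" by (rule J)
  have cop: "coprime (p ^ k) (q ^ l)" using primes_coprime[OF p q \<open>p \<noteq> q\<close>] by simp
  have "p ^ k dvd m" "q ^ l dvd m" by (simp_all add: m)
  then obtain z where z: "z \<in> J" "\<not> p ^ k dvd z" "\<not> q ^ l dvd z"
    using ideal_obtain_not_dvd_both[OF J _ _ assms(6,7)] by metis
  fix K assume "ideal K R \<and> K \<noteq> {\<zero>}"
  then have K: "ideal K R" "K \<noteq> {\<zero>}" by simp_all
  then obtain y where y: "y \<in> K" "y \<noteq> \<zero>" using ideal_zero_closed[OF K(1)] by blast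
  have "y \<in> carrier R" by (rule ideal.Icarr[OF K(1) y(1)])
  then have "\<not> m dvd y" using y(2) carrier_dvd_modulus_imp_zero by blast
  then have not_both: "\<not> (p ^ k dvd y \<and> q ^ l dvd y)" using m divides_mult[OF _ _ cop] by auto
  have "y \<noteq> 0" "z \<noteq> 0" using y(2) z(2) by (auto simp: res_zero_eq)
  \<comment> \<open>Since z is divisible by neither prime power, each of them divides lcm y z only via y.\<close>
  have "\<not> m dvd lcm y z"
  proof
    assume "m dvd lcm y z"
    then have "p ^ k dvd lcm y z" "q ^ l dvd lcm y z"
      unfolding m by (auto dest: dvd_mult_left dvd_mult_right)
    then have "p ^ k dvd y" "q ^ l dvd y"
      using prime_power_dvd_lcmD[OF p \<open>y \<noteq> 0\<close> \<open>z \<noteq> 0\<close>]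
        prime_power_dvd_lcmD[OF q \<open>y \<noteq> 0\<close> \<open>z \<noteq> 0\<close>] z(2,3) by blast+
    then show False using not_both by blast
  qed
  then have "lcm y z mod m \<noteq> \<zero>" by (simp add: res_zero_eq dvd_eq_mod_eq_0)
  moreover have "lcm y z mod m \<in> J" "lcm y z mod m \<in> K"
    using mod_mem_ideal[OF J z(1)] mod_mem_ideal[OF K(1) y(1)] by simp_all
  ultimately show "J \<inter> K \<noteq> {\<zero>}" by blast
qed

lemma essential_ideal_iff_not_subset_multiples:
  fixes p q :: int
  assumes m: "m = p ^ k * q ^ l" and "prime p" "prime q" "p \<noteq> q" "k > 0" "l > 0"
    and J: "ideal J R"
  shows "essential_ideal R J \<longleftrightarrow>
    \<not> J \<subseteq> {x \<in> carrier R. p ^ k dvd x} \<and> \<not> J \<subseteq> {x \<in> carrier R. q ^ l dvd x}"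
proof
  have cop: "coprime (p ^ k) (q ^ l)" and a: "1 < p ^ k" and b: "1 < q ^ l"
    using assms(2-6) primes_coprime by (auto simp: prime_gt_1_int)
  have m': "m = q ^ l * p ^ k" and cop': "coprime (q ^ l) (p ^ k)"
    using m cop by (simp_all add: coprime_commute)
  assume ess: "essential_ideal R J"
  show "\<not> J \<subseteq> {x \<in> carrier R. p ^ k dvd x} \<and> \<not> J \<subseteq> {x \<in> carrier R. q ^ l dvd x}"
    using essential_ideal_not_subset_multiples[OF ess m cop a b]
      essential_ideal_not_subset_multiples[OF ess m' cop' b a] by (rule conjI)
next
  assume "\<not> J \<subseteq> {x \<in> carrier R. p ^ k dvd x} \<and> \<not> J \<subseteq> {x \<in> carrier R. q ^ l dvd x}"
  then show "essential_ideal R J"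
    using essential_ideal_if_not_subset_multiples[OF assms(1-4) J] by (elim conjE)
qed

lemma finite_essential_ideal_graph_vertices: "finite (essential_ideal_graph_vertices R)"
proof (rule finite_subset)
  show "essential_ideal_graph_vertices R \<subseteq> Pow (carrier R)"
  proof
    fix I assume "I \<in> essential_ideal_graph_vertices R"
    then have "ideal I R" unfolding essential_ideal_graph_vertices_def by simp
    then show "I \<in> Pow (carrier R)" using ideal.Icarr by fast
  qed
qed simp

lemma laplacian_integral_essential_ideal_graph:
  fixes p q :: int
  assumes m: "m = p ^ k * q ^ l" and pq: "prime p" "prime q" "p \<noteq> q" "k > 0" "l > 0"
  shows "laplacian_integral (essential_ideal_graph_vertices R) (essential_ideal_graph_adj R)"
proof -
  define P where "P = {x \<in> carrier R. p ^ k dvd x}"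
  define Q where "Q = {x \<in> carrier R. q ^ l dvd x}"
  have cop: "coprime (p ^ k) (q ^ l)" and a: "1 < p ^ k" and b: "1 < q ^ l"
    using pq primes_coprime by (auto simp: prime_gt_1_int)
  then have "p ^ k < m" "q ^ l < m" using m by simp_all
  then have PQ: "ideal P R" "ideal Q R"
    unfolding P_def Q_def using a b m ideal_multiples[of "p ^ k"] ideal_multiples[of "q ^ l"]
    by simp_all
  have "P \<inter> Q = {\<zero>}"
    unfolding P_def Q_def using m cop by (rule multiples_inter_multiples)
  have ess: "essential_ideal R J \<longleftrightarrow> \<not> J \<subseteq> P \<and> \<not> J \<subseteq> Q" if "ideal J R" for J
    unfolding P_def Q_def using m pq that by (rule essential_ideal_iff_not_subset_multiples)
  have vertex: "ideal I R" "I \<noteq> {\<zero>}" if "I \<in> essential_ideal_graph_vertices R" for I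
    using that unfolding essential_ideal_graph_vertices_def by auto
  have not_in_both: "\<not> (I \<subseteq> P \<and> I \<subseteq> Q)" if "I \<in> essential_ideal_graph_vertices R" for I
  proof
    assume "I \<subseteq> P \<and> I \<subseteq> Q"
    then have "I \<subseteq> {\<zero>}" using \<open>P \<inter> Q = {\<zero>}\<close> by blast
    then show False using vertex[OF that] ideal_zero_closed by blast
  qed
  define E where "E I K \<longleftrightarrow> I = K \<or> (I \<subseteq> P \<and> K \<subseteq> P) \<or> (I \<subseteq> Q \<and> K \<subseteq> Q)" for I K
  have E_sym: "E K I" if "E I K" for I K
    using that unfolding E_def by metis
  have E_trans: "E I K" if "J \<in> essential_ideal_graph_vertices R" "E I J" "E J K" for I J K
    using that(2,3) not_in_both[OF that(1)] unfolding E_def by blast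
  have adj: "essential_ideal_graph_adj R I K \<longleftrightarrow> \<not> E I K"
    if "I \<in> essential_ideal_graph_vertices R" "K \<in> essential_ideal_graph_vertices R" for I K
  proof -
    have I: "ideal I R" and K: "ideal K R" using vertex(1) that by simp_all
    have "essential_ideal_graph_adj R I K \<longleftrightarrow> I \<noteq> K \<and> \<not> I <+> K \<subseteq> P \<and> \<not> I <+> K \<subseteq> Q"
      unfolding essential_ideal_graph_adj_def using ess[OF add_ideals[OF I K]] by simp
    also have "\<dots> \<longleftrightarrow> \<not> E I K"
      using set_add_ideals_subset_iff[OF I K PQ(1)] set_add_ideals_subset_iff[OF I K PQ(2)]
      unfolding E_def by simp
    finally show ?thesis .
  qed
  show ?thesis
    by (rule laplacian_integral_complete_multipartite[where E = E,
          OF finite_essential_ideal_graph_vertices E_sym E_trans adj])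
qed

end

theorem mainTheorem13:
  fixes p1 p2 m1 m2 :: nat and n :: int
  assumes "prime p1" and "prime p2" and "p1 < p2"
    and "m1 > 0" and "m2 > 0" and "m1 > 1 \<or> m2 > 1"
    and "n = int (p1 ^ m1 * p2 ^ m2)"
  shows "laplacian_integral
           (essential_ideal_graph_vertices (residue_ring n))
           (essential_ideal_graph_adj (residue_ring n))"
proof -
  have "1 < p1 ^ m1 * p2 ^ m2"
    using prime_gt_1_nat[OF assms(1)] prime_gt_1_nat[OF assms(2)] assms(4,5)
    by (intro less_1_mult one_less_power)
  then have "n > 1" using assms(7) by linarith
  then interpret residues n "residue_ring n" by unfold_locales
  show ?thesis
    using assms(1-5,7)
    by (intro laplacian_integral_essential_ideal_graph[of "int p1" m1 "int p2" m2]) auto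
qed

end
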